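(* Let $n\ge 2$ and $\pi\in RC(n)$. If $\pi$ is alternating ($\pi_1<\pi_2>\pi_3<\cdots$), then for every $i$ with $1<i<n$: $\pi_i>\max(\pi_1,\pi_n)$ if $i$ is even and $\pi_i<\min(\pi_1,\pi_n)$ if $i$ is odd. If $\pi$ is reverse-alternating ($\pi_1>\pi_2<\pi_3>\cdots$), then for every $i$ with $1<i<n$: $\pi_i<\min(\pi_1,\pi_n)$ if $i$ is even and $\pi_i>\max(\pi_1,\pi_n)$ if $i$ is odd.
   Context: Permutations of $[n]=\{1,\dots,n\}$ are written in one-line notation $\pi=(\pi_1,\dots,\pi_n)$; $S_n$ is the set of all of them. For a sequence $\tau=(\tau_1,\dots,\tau_m)$ of distinct numbers with $m\ge 2$, let $i(\tau)$ be the number of maximal increasing runs of consecutive entries of length at least $2$, and $d(\tau)$ the number of maximal decreasing runs of consecutive entries of length at least $2$; set $id(\tau)=i(\tau)+d(\tau)$. Equivalently, $id(\tau)=1+\#\{k: 2\le k\le m-1,\ (\tau_k-\tau_{k-1})(\tau_{k+1}-\tau_k)<0\}$. For $\pi\in S_n$, let $X(\pi)$ be the collection of all subsequences $\tau=(\pi_{j_1},\dots,\pi_{j_m})$ with $j_1<\dots<j_m$ and $m\ge 3$, and $t(\pi)=\sum_{\tau\in X(\pi)} id(\tau)$. Define $RC(n)=\{\pi\in S_n : t(\pi)=\max_{\sigma\in S_n} t(\sigma)\}$. *)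

theory Defs
  imports Main "HOL-Library.Sublist"
begin

definition perms :: "nat \<Rightarrow> nat list set" where
  "perms n = {p. distinct p \<and> set p = {1..n}}"

(* id(tau) = 1 + number of interior turning points (peaks/valleys), for length >= 2 *)
definition idstat :: "nat list \<Rightarrow> nat" where
  "idstat \<tau> = 1 + card {k. 1 \<le> k \<and> k + 1 < length \<tau> \<and>
      (int (\<tau> ! k) - int (\<tau> ! (k - 1))) * (int (\<tau> ! (k + 1)) - int (\<tau> ! k)) < 0}"

definition tstat :: "nat list \<Rightarrow> nat" where
  "tstat p = (\<Sum>J \<in> {J. J \<subseteq> {0..<length p} \<and> 3 \<le> card J}. idstat (nths p J))"

definition RC :: "nat \<Rightarrow> nat list set" where
  "RC n = {p \<in> perms n. tstat p = Max (tstat ` perms n)}"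

abbreviation ent :: "nat list \<Rightarrow> nat \<Rightarrow> nat" where
  "ent p i \<equiv> p ! (i - 1)"

definition alternating :: "nat list \<Rightarrow> bool" where
  "alternating p = (\<forall>i. 1 \<le> i \<and> i < length p \<longrightarrow>
      (if odd i then ent p i < ent p (i + 1) else ent p i > ent p (i + 1)))"

definition rev_alternating :: "nat list \<Rightarrow> bool" where
  "rev_alternating p = (\<forall>i. 1 \<le> i \<and> i < length p \<longrightarrow>
      (if odd i then ent p i > ent p (i + 1) else ent p i < ent p (i + 1)))"

end

theory Submission
  imports Defs
begin

text \<open>
  Counting the index sets in which three positions \<open>a < b < c\<close> appear consecutively gives
  \<open>t(\<pi>) = #{J. |J| \<ge> 3} + \<Sum> 2^a 2^(n-1-c)\<close>, the sum running over the triples at which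
  \<open>\<pi>\<close> turns. Exchanging two values \<open>v\<close> and \<open>v + 1\<close> flips the turn status of exactly the
  triples in which their positions are adjacent; if the triple with the nearest outer neighbour gains
  a turn, it outweighs all the others and \<open>t\<close> strictly increases. Hence in a maximiser the value
  just above a peak is neither at an end nor at a valley, and dually for valleys. When every interior
  position is a peak or a valley, all values above a peak therefore sit at peaks and all values
  below a valley at valleys, so the two end entries lie below every peak and above every valley.
\<close>

definition zigzag :: "'a::linorder \<Rightarrow> 'a \<Rightarrow> 'a \<Rightarrow> bool" where
  "zigzag x y z \<longleftrightarrow> (x < y \<and> z < y) \<or> (y < x \<and> y < z)"

lemma turn_product_neg_iff_zigzag:
  "(int y - int x) * (int z - int y) < 0 \<longleftrightarrow> zigzag x y z"
  by (auto simp: zigzag_def mult_less_0_iff)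

definition consecutive :: "'a::linorder set \<Rightarrow> 'a \<Rightarrow> 'a \<Rightarrow> bool" where
  "consecutive J a b \<longleftrightarrow> a \<in> J \<and> b \<in> J \<and> a < b \<and> (\<forall>x\<in>J. \<not> (a < x \<and> x < b))"

lemma strict_sorted_nth_less_iff:
  assumes "sorted_wrt (<) xs" "i < length xs" "j < length xs"
  shows "xs!i < (xs!j :: 'a::linorder) \<longleftrightarrow> i < j"
  using sorted_wrt_nth_less[OF assms(1)] assms(2,3)
  by (metis less_asym linorder_neqE_nat order.irrefl)

lemma consecutive_strict_sorted_iff:
  assumes sorted: "sorted_wrt (<) xs"
  shows "consecutive (set xs) a b \<longleftrightarrow> (\<exists>k. 0 < k \<and> k < length xs \<and> a = xs!(k-1) \<and> b = xs!k)"
proof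
  assume cons: "consecutive (set xs) a b"
  then obtain i k where i: "i < length xs" "xs!i = a" and k: "k < length xs" "xs!k = b"
    by (auto simp: consecutive_def in_set_conv_nth)
  have "i < k"
    using cons strict_sorted_nth_less_iff[OF sorted i(1) k(1)] i k by (simp add: consecutive_def)
  moreover have "\<not> i < k - 1"
  proof
    assume "i < k - 1"
    then have "a < xs!(k-1)" "xs!(k-1) < b"
      using strict_sorted_nth_less_iff[OF sorted] i k by auto
    then show False using cons k by (auto simp: consecutive_def)
  qed
  ultimately have "i = k - 1" by linarith
  then show "\<exists>k. 0 < k \<and> k < length xs \<and> a = xs!(k-1) \<and> b = xs!k"
    using i k \<open>i < k\<close> by (intro exI[of _ k]) auto
next
  assume "\<exists>k. 0 < k \<and> k < length xs \<and> a = xs!(k-1) \<and> b = xs!k"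
  then obtain k where k: "0 < k" "k < length xs" "a = xs!(k-1)" "b = xs!k" by blast
  have "\<not> (a < x \<and> x < b)" if "x \<in> set xs" for x
    using that k strict_sorted_nth_less_iff[OF sorted] by (auto simp: in_set_conv_nth)
  then show "consecutive (set xs) a b"
    using k strict_sorted_nth_less_iff[OF sorted, of "k-1" k] by (auto simp: consecutive_def)
qed

lemma nths_eq_map_filter: "nths p J = map (nth p) (filter (\<lambda>i. i \<in> J) [0..<length p])"
proof -
  have "zip p [0..<length p] = map (\<lambda>i. (p!i, i)) [0..<length p]"
    by (rule nth_equalityI) auto
  then show ?thesis by (simp add: nths_def filter_map comp_def)
qed

lemma idstat_nths:
  assumes J: "J \<subseteq> {0..<length p}"
  shows "idstat (nths p J) =
    1 + card {(a, b, c). consecutive J a b \<and> consecutive J b c \<and> zigzag (p!a) (p!b) (p!c)}"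
proof -
  define xs where "xs = filter (\<lambda>i. i \<in> J) [0..<length p]"
  have sorted: "sorted_wrt (<) xs" unfolding xs_def by (intro sorted_wrt_filter) simp
  have distinct: "distinct xs" unfolding xs_def by simp
  have set_xs: "set xs = J" unfolding xs_def using J by auto
  define K where "K = {k. 1 \<le> k \<and> k + 1 < length xs \<and> zigzag (p!(xs!(k-1))) (p!(xs!k)) (p!(xs!(k+1)))}"
  define g where "g k = (xs!(k-1), xs!k, xs!(k+1))" for k
  have "idstat (nths p J) = 1 + card K"
    unfolding idstat_def K_def xs_def nths_eq_map_filter
    by (simp add: turn_product_neg_iff_zigzag cong: conj_cong)
  moreover have "inj_on g K"
    using distinct by (auto simp: inj_on_def g_def K_def nth_eq_iff_index_eq)
  moreover have "g ` K = {(a, b, c). consecutive J a b \<and> consecutive J b c \<and> zigzag (p!a) (p!b) (p!c)}"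
  proof (intro set_eqI iffI)
    fix t assume "t \<in> g ` K"
    then obtain k where k: "1 \<le> k" "k + 1 < length xs" and t: "t = g k"
      and zz: "zigzag (p!(xs!(k-1))) (p!(xs!k)) (p!(xs!(k+1)))"
      by (auto simp: K_def)
    have "consecutive J (xs!(k-1)) (xs!k)"
      unfolding set_xs[symmetric] consecutive_strict_sorted_iff[OF sorted]
      using k by (intro exI[of _ k]) auto
    moreover have "consecutive J (xs!k) (xs!(k+1))"
      unfolding set_xs[symmetric] consecutive_strict_sorted_iff[OF sorted]
      using k by (intro exI[of _ "k+1"]) auto
    ultimately show "t \<in> {(a, b, c). consecutive J a b \<and> consecutive J b c \<and> zigzag (p!a) (p!b) (p!c)}"
      using t zz by (simp add: g_def)
  next
    fix t assume "t \<in> {(a, b, c). consecutive J a b \<and> consecutive J b c \<and> zigzag (p!a) (p!b) (p!c)}"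
    then obtain k k' where k: "0 < k" "k < length xs" and k': "0 < k'" "k' < length xs"
      and t: "t = (xs!(k-1), xs!k, xs!k')" and same: "xs!(k'-1) = xs!k"
      and zz: "zigzag (p!(xs!(k-1))) (p!(xs!k)) (p!(xs!k'))"
      unfolding set_xs[symmetric] consecutive_strict_sorted_iff[OF sorted] by auto
    have "k' = k + 1"
      using same k k' distinct by (simp add: nth_eq_iff_index_eq)
    then show "t \<in> g ` K"
      using k k' t zz by (auto simp: g_def K_def intro!: image_eqI[of _ _ k])
  qed
  ultimately show ?thesis by (metis card_image)
qed

definition subseq_index_sets :: "nat \<Rightarrow> nat set set" where
  "subseq_index_sets n = {J. J \<subseteq> {0..<n} \<and> 3 \<le> card J}"

definition increasing_triples :: "nat \<Rightarrow> (nat \<times> nat \<times> nat) set" where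
  "increasing_triples n = {(a, b, c). a < b \<and> b < c \<and> c < n}"

lemma finite_subseq_index_sets: "finite (subseq_index_sets n)"
  by (rule finite_subset[of _ "Pow {0..<n}"]) (auto simp: subseq_index_sets_def)

lemma finite_increasing_triples: "finite (increasing_triples n)"
  by (rule finite_subset[of _ "{..<n} \<times> {..<n} \<times> {..<n}"]) (auto simp: increasing_triples_def)

lemma card_index_sets_with_consecutive_triple:
  assumes abc: "a < b" "b < c" "c < n"
  shows "card {J \<in> subseq_index_sets n. consecutive J a b \<and> consecutive J b c} = 2^a * 2^(n - 1 - c)"
proof -
  define S where "S = {J \<in> subseq_index_sets n. consecutive J a b \<and> consecutive J b c}"
  define glue where "glue = (\<lambda>(A, B). A \<union> {a, b, c} \<union> B)"
  define split where "split = (\<lambda>J. (J \<inter> {..<a}, J \<inter> {c<..<n}))"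
  have bij: "bij_betw glue (Pow {..<a} \<times> Pow {c<..<n}) S"
  proof (rule bij_betw_byWitness[where f' = split])
    show "\<forall>x \<in> Pow {..<a} \<times> Pow {c<..<n}. split (glue x) = x"
      using abc by (auto simp: glue_def split_def)
    show "\<forall>J \<in> S. glue (split J) = J"
    proof
      fix J assume "J \<in> S"
      then have J: "J \<subseteq> {0..<n}" "consecutive J a b" "consecutive J b c"
        by (auto simp: S_def subseq_index_sets_def)
      show "glue (split J) = J"
      proof (intro equalityI subsetI)
        fix x assume "x \<in> glue (split J)"
        then show "x \<in> J" using J by (auto simp: glue_def split_def consecutive_def)
      next
        fix x assume x: "x \<in> J"
        then have "\<not> (a < x \<and> x < b)" "\<not> (b < x \<and> x < c)" "x < n"
          using J by (auto simp: consecutive_def)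
        then have "x < a \<or> x \<in> {a, b, c} \<or> c < x \<and> x < n" by auto
        then show "x \<in> glue (split J)" using x by (auto simp: glue_def split_def)
      qed
    qed
    show "glue ` (Pow {..<a} \<times> Pow {c<..<n}) \<subseteq> S"
    proof clarify
      fix A B assume AB: "A \<subseteq> {..<a}" "B \<subseteq> {c<..<n}"
      have sub: "glue (A, B) \<subseteq> {0..<n}" using AB abc by (auto simp: glue_def)
      have "3 = card {a, b, c}" using abc by auto
      also have "\<dots> \<le> card (glue (A, B))"
        using sub finite_subset[OF sub] by (intro card_mono) (auto simp: glue_def)
      finally show "glue (A, B) \<in> S"
        using sub AB abc by (auto simp: S_def subseq_index_sets_def glue_def consecutive_def)
    qed
    show "split ` S \<subseteq> Pow {..<a} \<times> Pow {c<..<n}"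
      by (auto simp: split_def)
  qed
  have "card S = card (Pow {..<a} \<times> Pow {c<..<n})"
    using bij_betw_same_card[OF bij] by simp
  then show ?thesis by (simp add: S_def card_cartesian_product card_Pow)
qed

definition weighted_turns :: "nat list \<Rightarrow> int" where
  "weighted_turns p = (\<Sum>(a, b, c) \<in> increasing_triples (length p).
     of_bool (zigzag (p!a) (p!b) (p!c)) * 2^a * 2^(length p - 1 - c))"

lemma tstat_eq_weighted_turns:
  "int (tstat p) = int (card (subseq_index_sets (length p))) + weighted_turns p"
proof -
  let ?F = "subseq_index_sets (length p)" and ?T = "increasing_triples (length p)"
  let ?turn = "\<lambda>J (a, b, c). consecutive J a b \<and> consecutive J b c \<and> zigzag (p!a) (p!b) (p!c)"
  have idstat_eq: "int (idstat (nths p J)) = 1 + (\<Sum>t \<in> ?T. of_bool (?turn J t))" if "J \<in> ?F" for J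
  proof -
    have "{(a, b, c). consecutive J a b \<and> consecutive J b c \<and> zigzag (p!a) (p!b) (p!c)} \<subseteq> ?T"
      using that by (auto simp: subseq_index_sets_def increasing_triples_def consecutive_def)
    then show ?thesis
      using that by (simp add: idstat_nths subseq_index_sets_def finite_increasing_triples Int_absorb1)
  qed
  have count: "(\<Sum>J \<in> ?F. of_bool (?turn J t)) =
      ((case t of (a, b, c) \<Rightarrow> of_bool (zigzag (p!a) (p!b) (p!c)) * 2^a * 2^(length p - 1 - c)) :: int)"
    if "t \<in> ?T" for t
  proof -
    obtain a b c where t: "t = (a, b, c)" by (cases t)
    then have abc: "a < b" "b < c" "c < length p" using that by (simp_all add: increasing_triples_def)
    show ?thesis
      using t card_index_sets_with_consecutive_triple[OF abc]
      by (cases "zigzag (p!a) (p!b) (p!c)") (simp_all add: finite_subseq_index_sets Int_def)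
  qed
  have "int (tstat p) = (\<Sum>J \<in> ?F. 1 + (\<Sum>t \<in> ?T. of_bool (?turn J t)))"
    unfolding tstat_def subseq_index_sets_def[symmetric] using idstat_eq by simp
  also have "\<dots> = int (card ?F) + (\<Sum>J \<in> ?F. \<Sum>t \<in> ?T. of_bool (?turn J t))"
    by (simp add: sum.distrib)
  also have "\<dots> = int (card ?F) + (\<Sum>t \<in> ?T. \<Sum>J \<in> ?F. of_bool (?turn J t))"
    by (subst sum.swap) (rule refl)
  also have "\<dots> = int (card ?F) + weighted_turns p"
    unfolding weighted_turns_def using count by (simp add: case_prod_beta)
  finally show ?thesis .
qed

lemma adjacent_values_less_iff:
  fixes x y z :: nat
  assumes "y = z + 1 \<or> z = y + 1" "x \<noteq> y" "x \<noteq> z"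
  shows "x < y \<longleftrightarrow> x < z" and "y < x \<longleftrightarrow> z < x"
  using assms by auto

lemma swap_adjacent_values_less_iff:
  fixes p :: "nat list"
  assumes "distinct p" "j < length p" "k < length p" and adj: "p!j = p!k + 1 \<or> p!k = p!j + 1"
    and "u < length p" "v < length p" "{u, v} \<noteq> {j, k}"
  shows "p[j := p!k, k := p!j] ! u < p[j := p!k, k := p!j] ! v \<longleftrightarrow> p!u < p!v"
proof -
  have ne: "p!x \<noteq> p!y" if "x < length p" "y < length p" "x \<noteq> y" for x y
    using assms(1) that by (simp add: nth_eq_iff_index_eq)
  have nth_swap: "p[j := p!k, k := p!j] ! x = (if x = k then p!j else if x = j then p!k else p!x)"
    if "x < length p" for x
    using that by (simp add: nth_list_update)
  show ?thesis
    using assms(2-7) ne[of u j] ne[of u k] ne[of v j] ne[of v k] ne[of u v]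
      adjacent_values_less_iff[OF adj, of "p!u"] adjacent_values_less_iff[OF adj, of "p!v"]
    by (simp add: nth_swap doubleton_eq_iff)
qed

lemma zigzag_swap_right:
  fixes w y z :: nat
  assumes "w \<noteq> y" "w \<noteq> z" "y = z + 1 \<or> z = y + 1"
  shows "zigzag w z y \<longleftrightarrow> \<not> zigzag w y z"
  using assms by (auto simp: zigzag_def)

lemma zigzag_swap_left:
  fixes w y z :: nat
  assumes "w \<noteq> y" "w \<noteq> z" "y = z + 1 \<or> z = y + 1"
  shows "zigzag z y w \<longleftrightarrow> \<not> zigzag y z w"
  using assms by (auto simp: zigzag_def)

lemma sum_signed_pow2_ge:
  assumes "\<forall>i<m. e i = 1 \<or> e i = (-1 :: int)"
  shows "1 - 2^m \<le> (\<Sum>i<m. 2^i * e i)"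
  using assms
proof (induction m)
  case (Suc m)
  then have "1 - 2^m \<le> (\<Sum>i<m. 2^i * e i)" "- (2^m) \<le> 2^m * e m" by auto
  then show ?case by simp
qed simp

lemma sum_signed_pow2_pos:
  assumes "\<forall>i<m. e i = 1 \<or> e i = (-1 :: int)" "0 < m" "e (m - 1) = 1"
  shows "1 \<le> (\<Sum>i<m. 2^i * e i)"
proof -
  obtain m' where m: "m = Suc m'" using assms(2) by (cases m) auto
  then have "1 - 2^m' \<le> (\<Sum>i<m'. 2^i * e i)"
    using assms(1) by (intro sum_signed_pow2_ge) simp
  then show ?thesis using assms(3) m by simp
qed

lemma zigzag_swap_adjacent_values:
  fixes p :: "nat list"
  assumes "distinct p" "j < length p" "k < length p" "p!j = p!k + 1 \<or> p!k = p!j + 1"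
    and "a < length p" "b < length p" "c < length p" "{a, b} \<noteq> {j, k}" "{b, c} \<noteq> {j, k}"
  shows "zigzag (p[j := p!k, k := p!j] ! a) (p[j := p!k, k := p!j] ! b) (p[j := p!k, k := p!j] ! c)
    \<longleftrightarrow> zigzag (p!a) (p!b) (p!c)"
proof -
  have "{b, a} \<noteq> {j, k}" "{c, b} \<noteq> {j, k}" using assms(8,9) by (simp_all add: insert_commute)
  then show ?thesis
    using assms swap_adjacent_values_less_iff[OF assms(1-4)] by (simp add: zigzag_def)
qed

definition turn_gain :: "nat list \<Rightarrow> nat list \<Rightarrow> nat \<Rightarrow> nat \<Rightarrow> nat \<Rightarrow> int" where
  "turn_gain p q a b c = of_bool (zigzag (q!a) (q!b) (q!c)) - of_bool (zigzag (p!a) (p!b) (p!c))"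

lemma weighted_turns_diff_local:
  fixes p q :: "nat list"
  defines "n \<equiv> length p"
  assumes len: "length q = n" and jk: "j < k" "k < n"
    and same: "\<And>a b c. a < b \<Longrightarrow> b < c \<Longrightarrow> c < n \<Longrightarrow> (a, b) \<noteq> (j, k) \<Longrightarrow> (b, c) \<noteq> (j, k) \<Longrightarrow>
      zigzag (q!a) (q!b) (q!c) \<longleftrightarrow> zigzag (p!a) (p!b) (p!c)"
  shows "weighted_turns q - weighted_turns p =
    2^(n - 1 - k) * (\<Sum>a<j. 2^a * turn_gain p q a j k)
    + 2^j * (\<Sum>i<n - 1 - k. 2^i * turn_gain p q j k (n - 1 - i))"
proof -
  let ?T = "increasing_triples n"
  define f where "f = (\<lambda>(a, b, c). turn_gain p q a b c * 2^a * 2^(n - 1 - c))"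
  define m where "m = n - 1 - k"
  define S1 where "S1 = (\<lambda>a. (a, j, k)) ` {..<j}"
  define S2 where "S2 = (\<lambda>i. (j, k, n - 1 - i)) ` {..<m}"
  have "weighted_turns q - weighted_turns p = (\<Sum>t \<in> ?T. f t)"
    unfolding weighted_turns_def len n_def[symmetric] sum_subtractf[symmetric]
    by (intro sum.cong) (auto simp: f_def turn_gain_def algebra_simps)
  also have "\<dots> = (\<Sum>t \<in> S1 \<union> S2. f t)"
  proof (rule sum.mono_neutral_right[OF finite_increasing_triples])
    show "S1 \<union> S2 \<subseteq> ?T" using jk by (auto simp: S1_def S2_def m_def increasing_triples_def)
    show "\<forall>t \<in> ?T - (S1 \<union> S2). f t = 0"
    proof
      fix t assume t: "t \<in> ?T - (S1 \<union> S2)"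
      then obtain a b c where abc: "t = (a, b, c)" "a < b" "b < c" "c < n"
        by (cases t) (auto simp: increasing_triples_def)
      have "(b, c) \<noteq> (j, k)" using t abc by (auto simp: S1_def)
      moreover have "(a, b) \<noteq> (j, k)"
      proof
        assume "(a, b) = (j, k)"
        then have "t = (\<lambda>i. (j, k, n - 1 - i)) (n - 1 - c)" "n - 1 - c < m"
          using abc by (auto simp: m_def)
        then show False using t by (auto simp: S2_def)
      qed
      ultimately show "f t = 0" using same abc by (simp add: f_def turn_gain_def)
    qed
  qed
  also have "\<dots> = (\<Sum>t \<in> S1. f t) + (\<Sum>t \<in> S2. f t)"
    using jk by (intro sum.union_disjoint) (auto simp: S1_def S2_def)
  also have "(\<Sum>t \<in> S1. f t) = 2^(n - 1 - k) * (\<Sum>a<j. 2^a * turn_gain p q a j k)"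
    by (simp add: S1_def sum.reindex inj_on_def f_def sum_distrib_left algebra_simps)
  also have "(\<Sum>t \<in> S2. f t) = 2^j * (\<Sum>i<m. 2^i * turn_gain p q j k (n - 1 - i))"
  proof -
    have "inj_on (\<lambda>i. (j, k, n - 1 - i)) {..<m}" by (auto simp: inj_on_def m_def)
    then have "(\<Sum>t \<in> S2. f t) = (\<Sum>i<m. f (j, k, n - 1 - i))"
      unfolding S2_def by (simp add: sum.reindex)
    also have "\<dots> = (\<Sum>i<m. 2^j * (2^i * turn_gain p q j k (n - 1 - i)))"
      by (rule sum.cong) (auto simp: f_def m_def)
    finally show ?thesis by (simp add: sum_distrib_left)
  qed
  finally show ?thesis by (simp add: m_def)
qed

text \<open>
  Only the triples \<open>(a, j, k)\<close> and \<open>(j, k, c)\<close> change, each flipping its turn status. The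
  hypotheses \<open>left\<close> and \<open>right\<close> say that the triple with the nearest outer neighbour, which
  carries the largest weight among them, gains a turn.
\<close>

lemma weighted_turns_swap_less:
  fixes p :: "nat list" and j k :: nat
  defines "n \<equiv> length p" and "q \<equiv> p[j := p!k, k := p!j]"
  assumes dist: "distinct p" and jk: "j < k" "k < n" and adj: "p!j = p!k + 1 \<or> p!k = p!j + 1"
    and left: "j = 0 \<or> (p!(j-1) < p!j \<longleftrightarrow> p!j < p!k)"
    and right: "k = n - 1 \<or> (p!k < p!(k+1) \<longleftrightarrow> p!j < p!k)"
    and inner: "0 < j \<or> k < n - 1"
  shows "weighted_turns p < weighted_turns q"
proof -
  define m where "m = n - 1 - k"
  have q_nth: "q!j = p!k" "q!k = p!j" "\<And>x. x \<noteq> j \<Longrightarrow> x \<noteq> k \<Longrightarrow> q!x = p!x"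
    using jk by (auto simp: q_def n_def nth_list_update)
  have ne: "p!x \<noteq> p!y" if "x < n" "y < n" "x \<noteq> y" for x y
    using dist that by (simp add: n_def nth_eq_iff_index_eq)
  have diff: "weighted_turns q - weighted_turns p =
    2^(n - 1 - k) * (\<Sum>a<j. 2^a * turn_gain p q a j k) + 2^j * (\<Sum>i<m. 2^i * turn_gain p q j k (n - 1 - i))"
    unfolding m_def q_def n_def
  proof (rule weighted_turns_diff_local)
    fix a b c assume "a < b" "b < c" "c < length p" "(a, b) \<noteq> (j, k)" "(b, c) \<noteq> (j, k)"
    then show "zigzag (p[j := p!k, k := p!j] ! a) (p[j := p!k, k := p!j] ! b) (p[j := p!k, k := p!j] ! c)
      \<longleftrightarrow> zigzag (p!a) (p!b) (p!c)"
      using jk by (intro zigzag_swap_adjacent_values[OF dist _ _ adj]) (auto simp: n_def doubleton_eq_iff)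
  qed (use jk in \<open>simp_all add: n_def\<close>)
  have signs1: "\<forall>a<j. turn_gain p q a j k = 1 \<or> turn_gain p q a j k = -1"
  proof (intro allI impI)
    fix a assume "a < j"
    then have "zigzag (q!a) (q!j) (q!k) \<longleftrightarrow> \<not> zigzag (p!a) (p!j) (p!k)"
      using q_nth jk adj ne[of a j] ne[of a k] by (simp add: zigzag_swap_right)
    then show "turn_gain p q a j k = 1 \<or> turn_gain p q a j k = -1" by (auto simp: turn_gain_def)
  qed
  have lead1: "turn_gain p q (j - 1) j k = 1" if "0 < j"
    using that left q_nth jk adj ne[of "j - 1" j] ne[of "j - 1" k]
    by (auto simp: turn_gain_def zigzag_def)
  have signs2: "\<forall>i<m. turn_gain p q j k (n - 1 - i) = 1 \<or> turn_gain p q j k (n - 1 - i) = -1"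
  proof (intro allI impI)
    fix i assume "i < m"
    then have "zigzag (q!j) (q!k) (q!(n - 1 - i)) \<longleftrightarrow> \<not> zigzag (p!j) (p!k) (p!(n - 1 - i))"
      using q_nth jk adj ne[of "n - 1 - i" j] ne[of "n - 1 - i" k]
      by (simp add: m_def zigzag_swap_left)
    then show "turn_gain p q j k (n - 1 - i) = 1 \<or> turn_gain p q j k (n - 1 - i) = -1"
      by (auto simp: turn_gain_def)
  qed
  have lead2: "turn_gain p q j k (n - 1 - (m - 1)) = 1" if "0 < m"
  proof -
    have idx: "n - 1 - (m - 1) = k + 1" and "k + 1 < n" using that jk by (auto simp: m_def)
    then have "q!(k + 1) = p!(k + 1)" "p!k < p!(k + 1) \<longleftrightarrow> p!j < p!k"
      using q_nth(3)[of "k + 1"] right jk by auto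
    then have "turn_gain p q j k (k + 1) = 1"
      using q_nth(1,2) adj ne[of "k + 1" j] ne[of "k + 1" k] \<open>k + 1 < n\<close>
      by (auto simp: turn_gain_def zigzag_def)
    then show ?thesis by (simp only: idx)
  qed
  have nonneg1: "0 \<le> (\<Sum>a<j. 2^a * turn_gain p q a j k)"
    using sum_signed_pow2_pos[OF signs1] lead1 by (cases "j = 0") auto
  have nonneg2: "0 \<le> (\<Sum>i<m. 2^i * turn_gain p q j k (n - 1 - i))"
    using sum_signed_pow2_pos[OF signs2] lead2 by (cases "m = 0") auto
  have "0 < j \<or> 0 < m" using inner jk by (auto simp: m_def)
  then have "0 < (\<Sum>a<j. 2^a * turn_gain p q a j k) \<or> 0 < (\<Sum>i<m. 2^i * turn_gain p q j k (n - 1 - i))"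
    using sum_signed_pow2_pos[OF signs1] sum_signed_pow2_pos[OF signs2] lead1 lead2 by fastforce
  then have "0 < weighted_turns q - weighted_turns p"
    unfolding diff using nonneg1 nonneg2 by (auto intro: add_pos_nonneg add_nonneg_pos)
  then show ?thesis by simp
qed

lemma length_perms: "p \<in> perms n \<Longrightarrow> length p = n"
  unfolding perms_def using distinct_card by fastforce

lemma finite_perms: "finite (perms n)"
  by (rule finite_subset[OF _ finite_lists_length_eq[of "{1..n}" n]])
     (auto simp: perms_def distinct_card[symmetric])

lemma perms_swap:
  assumes "p \<in> perms n" "j < n" "k < n"
  shows "p[j := p!k, k := p!j] \<in> perms n"
  using assms by (simp add: perms_def length_perms)

lemma perms_nth_range: "p \<in> perms n \<Longrightarrow> i < n \<Longrightarrow> 1 \<le> p!i \<and> p!i \<le> n"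
  using nth_mem[of i p] by (auto simp: perms_def length_perms)

lemma perms_value_position: "p \<in> perms n \<Longrightarrow> 1 \<le> v \<Longrightarrow> v \<le> n \<Longrightarrow> \<exists>i<n. p!i = v"
  using length_perms[of p n] by (auto simp: perms_def in_set_conv_nth[symmetric])

lemma perms_nth_inj: "p \<in> perms n \<Longrightarrow> i < n \<Longrightarrow> i' < n \<Longrightarrow> p!i = p!i' \<Longrightarrow> i = i'"
  using length_perms[of p n] by (auto simp: perms_def nth_eq_iff_index_eq)

lemma RC_no_improving_swap:
  assumes p: "p \<in> RC n" and jk: "j < k" "k < n" and adj: "p!j = p!k + 1 \<or> p!k = p!j + 1"
    and "j = 0 \<or> (p!(j-1) < p!j \<longleftrightarrow> p!j < p!k)"
    and "k = n - 1 \<or> (p!k < p!(k+1) \<longleftrightarrow> p!j < p!k)"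
    and "0 < j \<or> k < n - 1"
  shows False
proof -
  define q where "q = p[j := p!k, k := p!j]"
  have pp: "p \<in> perms n" and max: "tstat p = Max (tstat ` perms n)"
    using p by (auto simp: RC_def)
  have len: "length p = n" using length_perms[OF pp] .
  have q: "q \<in> perms n" using perms_swap[OF pp] jk by (simp add: q_def)
  have "weighted_turns p < weighted_turns q"
    using weighted_turns_swap_less[of p j k] assms pp by (simp add: q_def len perms_def)
  then have "tstat p < tstat q"
    using tstat_eq_weighted_turns[of p] tstat_eq_weighted_turns[of q] len length_perms[OF q] by simp
  moreover have "tstat q \<le> tstat p" using q max finite_perms by simp
  ultimately show False by simp
qed

definition peak :: "'a::linorder list \<Rightarrow> nat \<Rightarrow> bool" where
  "peak p i \<longleftrightarrow> 0 < i \<and> i + 1 < length p \<and> p!(i-1) < p!i \<and> p!(i+1) < p!i"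

definition valley :: "'a::linorder list \<Rightarrow> nat \<Rightarrow> bool" where
  "valley p i \<longleftrightarrow> 0 < i \<and> i + 1 < length p \<and> p!i < p!(i-1) \<and> p!i < p!(i+1)"

lemma RC_peak_successor:
  assumes p: "p \<in> RC n" and i: "peak p i" and i': "i' < n" "p!i' = p!i + 1"
  shows "0 < i' \<and> i' < n - 1 \<and> \<not> valley p i'"
proof -
  have len: "length p = n" using p length_perms by (auto simp: RC_def)
  have inner: "0 < i" "i < n - 1" using i len by (auto simp: peak_def)
  have "i' \<noteq> 0"
  proof
    assume "i' = 0"
    then show False using RC_no_improving_swap[OF p, of 0 i] i i' len inner by (auto simp: peak_def)
  qed
  moreover have "i' \<noteq> n - 1"
  proof
    assume "i' = n - 1"
    then show False using RC_no_improving_swap[OF p, of i "n - 1"] i i' len inner by (auto simp: peak_def)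
  qed
  moreover have "\<not> valley p i'"
  proof
    assume v: "valley p i'"
    show False
    proof (cases "i < i'")
      case True
      then show False using RC_no_improving_swap[OF p True] i v i' len by (auto simp: peak_def valley_def)
    next
      case False
      then have "i' < i" using i' by (cases "i = i'") auto
      then show False using RC_no_improving_swap[OF p \<open>i' < i\<close>] i v i' len by (auto simp: peak_def valley_def)
    qed
  qed
  ultimately show ?thesis using i' by auto
qed

lemma RC_valley_predecessor:
  assumes p: "p \<in> RC n" and i: "valley p i" and i': "i' < n" "p!i' + 1 = p!i"
  shows "0 < i' \<and> i' < n - 1 \<and> \<not> peak p i'"
proof -
  have len: "length p = n" using p length_perms by (auto simp: RC_def)
  have inner: "0 < i" "i < n - 1" using i len by (auto simp: valley_def)
  have "i' \<noteq> 0"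
  proof
    assume "i' = 0"
    then show False using RC_no_improving_swap[OF p, of 0 i] i i' len inner by (auto simp: valley_def)
  qed
  moreover have "i' \<noteq> n - 1"
  proof
    assume "i' = n - 1"
    then show False using RC_no_improving_swap[OF p, of i "n - 1"] i i' len inner by (auto simp: valley_def)
  qed
  moreover have "\<not> peak p i'"
  proof
    assume v: "peak p i'"
    show False
    proof (cases "i < i'")
      case True
      then show False using RC_no_improving_swap[OF p True] i v i' len by (auto simp: peak_def valley_def)
    next
      case False
      then have "i' < i" using i' by (cases "i = i'") auto
      then show False using RC_no_improving_swap[OF p \<open>i' < i\<close>] i v i' len by (auto simp: peak_def valley_def)
    qed
  qed
  ultimately show ?thesis using i' by auto
qed

lemma RC_peak_values_upward:
  assumes p: "p \<in> RC n" and turns: "\<And>m. 0 < m \<Longrightarrow> m + 1 < n \<Longrightarrow> peak p m \<or> valley p m"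
    and i: "peak p i" and v: "p!i \<le> v" "v \<le> n"
  shows "\<exists>i'. peak p i' \<and> p!i' = v"
  using v(1)
proof (induction v rule: dec_induct)
  case base
  then show ?case using i by blast
next
  case (step w)
  then obtain i' where i': "peak p i'" "p!i' = w" by blast
  have "p \<in> perms n" using p by (simp add: RC_def)
  then obtain i'' where i'': "i'' < n" "p!i'' = p!i' + 1"
    using perms_value_position[of p n "w + 1"] step.hyps(2) v(2) i' by auto
  then have "peak p i''"
    using RC_peak_successor[OF p i'(1) i''] turns[of i''] by auto
  then show ?case using i'' i' by auto
qed

lemma RC_valley_values_downward:
  assumes p: "p \<in> RC n" and turns: "\<And>m. 0 < m \<Longrightarrow> m + 1 < n \<Longrightarrow> peak p m \<or> valley p m"
    and i: "valley p i" and v: "1 \<le> v" "v \<le> p!i"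
  shows "\<exists>i'. valley p i' \<and> p!i' = v"
  using v(2)
proof (induction v rule: inc_induct)
  case base
  then show ?case using i by blast
next
  case (step w)
  then obtain i' where i': "valley p i'" "p!i' = w + 1" by auto
  have pp: "p \<in> perms n" using p by (simp add: RC_def)
  have "p!i' \<le> n"
    using perms_nth_range[OF pp, of i'] i' length_perms[OF pp] by (auto simp: valley_def)
  then obtain i'' where i'': "i'' < n" "p!i'' + 1 = p!i'"
    using perms_value_position[OF pp, of w] step.hyps(1) v(1) i' by auto
  then have "valley p i''"
    using RC_valley_predecessor[OF p i'(1) i''] turns[of i''] by auto
  then show ?case using i'' i' by auto
qed

lemma RC_peak_above_ends:
  assumes p: "p \<in> RC n" and turns: "\<And>m. 0 < m \<Longrightarrow> m + 1 < n \<Longrightarrow> peak p m \<or> valley p m"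
    and i: "peak p i"
  shows "p!0 < p!i \<and> p!(n - 1) < p!i"
proof -
  have pp: "p \<in> perms n" using p by (simp add: RC_def)
  have "p!e < p!i" if e: "e = 0 \<or> e = n - 1" for e
  proof (rule ccontr)
    assume "\<not> p!e < p!i"
    moreover have "e < n" "\<not> peak p e" using e i length_perms[OF pp] by (auto simp: peak_def)
    ultimately obtain i' where "peak p i'" "p!i' = p!e"
      using RC_peak_values_upward[OF p turns i, of "p!e"] perms_nth_range[OF pp] by auto
    then show False
      using perms_nth_inj[OF pp, of i' e] \<open>e < n\<close> \<open>\<not> peak p e\<close> length_perms[OF pp]
      by (auto simp: peak_def)
  qed
  then show ?thesis by blast
qed

lemma RC_valley_below_ends:
  assumes p: "p \<in> RC n" and turns: "\<And>m. 0 < m \<Longrightarrow> m + 1 < n \<Longrightarrow> peak p m \<or> valley p m"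
    and i: "valley p i"
  shows "p!i < p!0 \<and> p!i < p!(n - 1)"
proof -
  have pp: "p \<in> perms n" using p by (simp add: RC_def)
  have "p!i < p!e" if e: "e = 0 \<or> e = n - 1" for e
  proof (rule ccontr)
    assume "\<not> p!i < p!e"
    moreover have "e < n" "\<not> valley p e" using e i length_perms[OF pp] by (auto simp: valley_def)
    ultimately obtain i' where "valley p i'" "p!i' = p!e"
      using RC_valley_values_downward[OF p turns i, of "p!e"] perms_nth_range[OF pp] by auto
    then show False
      using perms_nth_inj[OF pp, of i' e] \<open>e < n\<close> \<open>\<not> valley p e\<close> length_perms[OF pp]
      by (auto simp: valley_def)
  qed
  then show ?thesis by blast
qed

lemma alternating_peak_valley:
  assumes "alternating p" "0 < m" "m + 1 < length p"
  shows "if odd m then peak p m else valley p m"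
  using assms(1)[unfolded alternating_def, rule_format, of m]
    assms(1)[unfolded alternating_def, rule_format, of "m + 1"] assms(2,3)
  by (auto simp: peak_def valley_def)

lemma rev_alternating_peak_valley:
  assumes "rev_alternating p" "0 < m" "m + 1 < length p"
  shows "if odd m then valley p m else peak p m"
  using assms(1)[unfolded rev_alternating_def, rule_format, of m]
    assms(1)[unfolded rev_alternating_def, rule_format, of "m + 1"] assms(2,3)
  by (auto simp: peak_def valley_def)

lemma RC_alternating_vs_ends:
  assumes p: "p \<in> RC n" and alt: "alternating p" and m: "0 < m" "m + 1 < n"
  shows "if odd m then max (p!0) (p!(n - 1)) < p!m else p!m < min (p!0) (p!(n - 1))"
proof -
  have len: "length p = n" using p length_perms by (auto simp: RC_def)
  have shape: "if odd m' then peak p m' else valley p m'" if "0 < m'" "m' + 1 < n" for m'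
    using alternating_peak_valley[OF alt that(1)] that(2) len by simp
  have turns: "peak p m' \<or> valley p m'" if "0 < m'" "m' + 1 < n" for m'
    using shape[OF that] by (simp split: if_splits)
  show ?thesis
    using RC_peak_above_ends[OF p turns] RC_valley_below_ends[OF p turns] shape[OF m] by auto
qed

lemma RC_rev_alternating_vs_ends:
  assumes p: "p \<in> RC n" and alt: "rev_alternating p" and m: "0 < m" "m + 1 < n"
  shows "if odd m then p!m < min (p!0) (p!(n - 1)) else max (p!0) (p!(n - 1)) < p!m"
proof -
  have len: "length p = n" using p length_perms by (auto simp: RC_def)
  have shape: "if odd m' then valley p m' else peak p m'" if "0 < m'" "m' + 1 < n" for m'
    using rev_alternating_peak_valley[OF alt that(1)] that(2) len by simp
  have turns: "peak p m' \<or> valley p m'" if "0 < m'" "m' + 1 < n" for m'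
    using shape[OF that] by (simp split: if_splits)
  show ?thesis
    using RC_peak_above_ends[OF p turns] RC_valley_below_ends[OF p turns] shape[OF m] by auto
qed

theorem mainTheorem3:
  fixes n :: nat and p :: "nat list"
  assumes "n \<ge> 2" and "p \<in> RC n"
  shows "(alternating p \<longrightarrow>
            (\<forall>i. 1 < i \<and> i < n \<longrightarrow>
               (even i \<longrightarrow> ent p i > max (ent p 1) (ent p n)) \<and>
               (odd i \<longrightarrow> ent p i < min (ent p 1) (ent p n))))
       \<and> (rev_alternating p \<longrightarrow>
            (\<forall>i. 1 < i \<and> i < n \<longrightarrow>
               (even i \<longrightarrow> ent p i < min (ent p 1) (ent p n)) \<and>
               (odd i \<longrightarrow> ent p i > max (ent p 1) (ent p n))))"
proof (rule conjI; intro impI allI)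
  fix i assume alt: "alternating p" and i: "1 < i \<and> i < n"
  then have "odd (i - 1) \<longleftrightarrow> even i" by (cases i) auto
  with RC_alternating_vs_ends[OF assms(2) alt, of "i - 1"] i
  show "(even i \<longrightarrow> ent p i > max (ent p 1) (ent p n)) \<and>
      (odd i \<longrightarrow> ent p i < min (ent p 1) (ent p n))"
    by (auto split: if_splits)
next
  fix i assume alt: "rev_alternating p" and i: "1 < i \<and> i < n"
  then have "odd (i - 1) \<longleftrightarrow> even i" by (cases i) auto
  with RC_rev_alternating_vs_ends[OF assms(2) alt, of "i - 1"] i
  show "(even i \<longrightarrow> ent p i < min (ent p 1) (ent p n)) \<and>
      (odd i \<longrightarrow> ent p i > max (ent p 1) (ent p n))"
    by (auto split: if_splits)
qed

end
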